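(* Let $a\in\mathbb{N}$ and $b,d\in\mathbb{Z}$ with $b>d$, $\gcd(a,b-d)=1$ and $a\mid bd$. Then there exist $A,B\in\mathbb{N}$ with $B\ge 2$ and $A=B(B-1)$ such that $R_{a,b,a,d}\supseteq R_{A,B,A,B-1}$; in particular $\omega(G_{a,b,a,d})\ge\omega(G_{A,B,A,B-1})$. Moreover, there exist $C,D\in\mathbb{N}$ such that for every integer $m\ge 1$, setting $n=Cm+D$, $$\frac{an+b}{an+d}=\frac{Am+B}{Am+(B-1)}.$$
   Context: $\mathbb{N}=\{1,2,\dots\}$. For $a,c\in\mathbb{N}$, $b,d\in\mathbb{Z}$, $R_{a,b,c,d} := \left\{ \frac{an+b}{cn+d} : n \in \mathbb{N} \right\} \cap (\mathbb{Q}_{>0}\setminus\{1\})$; $G_{a,b,c,d}$ is the graph with vertex set $\mathbb{N}$ and edge set $\{\{m,n\}: m/n\in R_{a,b,c,d}\}$. $\omega$ denotes clique number. *)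

theory Defs
  imports Main "HOL-Library.Extended_Nat"
begin

text \<open>R_{a,b,c,d} = { (an+b)/(cn+d) : n \<in> N, n \<ge> 1 } intersected with positive rationals other than 1.
  (If cn+d = 0 the quotient is 0 in HOL, which is excluded by positivity.)\<close>
definition Rset :: "nat \<Rightarrow> int \<Rightarrow> nat \<Rightarrow> int \<Rightarrow> rat set" where
  "Rset a b c d =
     {q. \<exists>n::nat. n \<ge> 1 \<and> q = (of_nat a * of_nat n + of_int b) / (of_nat c * of_nat n + of_int d)}
     \<inter> {q. q > 0 \<and> q \<noteq> 1}"

definition Gadj :: "nat \<Rightarrow> int \<Rightarrow> nat \<Rightarrow> int \<Rightarrow> nat \<Rightarrow> nat \<Rightarrow> bool" where
  "Gadj a b c d m n \<longleftrightarrow> m \<ge> 1 \<and> n \<ge> 1 \<and>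
     (of_nat m / of_nat n \<in> Rset a b c d \<or> of_nat n / of_nat m \<in> Rset a b c d)"

definition is_clique :: "nat \<Rightarrow> int \<Rightarrow> nat \<Rightarrow> int \<Rightarrow> nat set \<Rightarrow> bool" where
  "is_clique a b c d K \<longleftrightarrow> K \<subseteq> {1..} \<and> (\<forall>m\<in>K. \<forall>n\<in>K. m \<noteq> n \<longrightarrow> Gadj a b c d m n)"

definition clique_number :: "nat \<Rightarrow> int \<Rightarrow> nat \<Rightarrow> int \<Rightarrow> enat" where
  "clique_number a b c d = (SUP K \<in> {K. finite K \<and> is_clique a b c d K}. enat (card K))"

end

theory Submission
  imports Defs
begin

text \<open>Put \<open>k = b - d\<close> and choose \<open>x > \<bar>d\<bar>\<close> (so that \<open>k x > d\<close>) with \<open>k x \<equiv> d (mod a)\<close>. Then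
  \<open>k\<^sup>2 x (x + 1) \<equiv> d b \<equiv> 0\<close>, so \<open>a\<close> divides \<open>x (x + 1) = A\<close> with \<open>B = x + 1\<close>.
  Substituting \<open>n = (k A / a) m + (k x - d) / a\<close> gives \<open>a n + d = k (A m + B - 1)\<close> and
  \<open>a n + b = k (A m + B)\<close>, so the two fractions agree; every ratio of \<open>R\<^sub>A\<^sub>,\<^sub>B\<^sub>,\<^sub>A\<^sub>,\<^sub>B\<^sub>-\<^sub>1\<close> is
  therefore a ratio of \<open>R\<^sub>a\<^sub>,\<^sub>b\<^sub>,\<^sub>a\<^sub>,\<^sub>d\<close>, and cliques of the smaller graph are cliques of the larger.\<close>

lemma Rset_subset_Rset:
  assumes "\<And>m. m \<ge> 1 \<Longrightarrow> f m \<ge> 1 \<and>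
    (of_nat A * of_nat m + of_int B) / (of_nat C * of_nat m + of_int D)
      = (of_nat a * of_nat (f m) + of_int b) / (of_nat c * of_nat (f m) + of_int d :: rat)"
  shows "Rset A B C D \<subseteq> Rset a b c d"
  unfolding Rset_def using assms by fastforce

lemma clique_number_mono:
  assumes "Rset a b c d \<subseteq> Rset a' b' c' d'"
  shows "clique_number a b c d \<le> clique_number a' b' c' d'"
  unfolding clique_number_def
proof (rule SUP_subset_mono)
  show "{K. finite K \<and> is_clique a b c d K} \<subseteq> {K. finite K \<and> is_clique a' b' c' d' K}"
    using assms unfolding is_clique_def Gadj_def by blast
qed simp

lemma linear_congruence_large_solution:
  fixes a k d N :: int
  assumes "a \<ge> 1" and "coprime a k"
  obtains x where "x \<ge> N" and "a dvd k * x - d"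
proof -
  obtain u v where bezout: "u * a + v * k = 1"
    using bezout_int[of a k] assms(2) by (auto simp: coprime_iff_gcd_eq_1)
  define t where "t = \<bar>N\<bar> + \<bar>v * d\<bar>"
  have "t \<le> t * a"
    using mult_left_mono[of 1 a t] assms(1) by (simp add: t_def)
  then have large: "v * d + t * a \<ge> N"
    unfolding t_def by linarith
  have vk: "v * k = 1 - u * a"
    using bezout by linarith
  have "k * (v * d + t * a) - d = (v * k - 1) * d + a * (k * t)"
    by (simp add: algebra_simps)
  also have "\<dots> = a * (k * t - u * d)"
    unfolding vk by (simp add: algebra_simps)
  finally have "a dvd k * (v * d + t * a) - d"
    by simp
  with large show thesis
    using that by blast
qed

lemma dvd_pronic_of_congruence:
  fixes a b d x :: int
  assumes "coprime a (b - d)" and "a dvd b * d" and "a dvd (b - d) * x - d"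
  shows "a dvd x * (x + 1)"
proof -
  obtain s where s: "(b - d) * x = d + a * s"
    using assms(3) by (metis diff_eq_eq add.commute dvdE)
  have "(b - d)\<^sup>2 * (x * (x + 1)) = ((b - d) * x) * ((b - d) * x + (b - d))"
    by (simp add: power2_eq_square algebra_simps)
  also have "\<dots> = b * d + a * (s * (b + d + a * s))"
    unfolding s by (simp add: algebra_simps)
  finally have "a dvd (b - d)\<^sup>2 * (x * (x + 1))"
    using assms(2) by (metis dvd_add dvd_triv_left)
  then show ?thesis
    using assms(1) by (simp add: coprime_dvd_mult_right_iff)
qed

lemma substitution_ratio_eq:
  fixes a A B C D m :: nat and b d :: int
  assumes "b > d" and "B \<ge> 2"
    and slope: "int a * int C = (b - d) * int A"
    and offset: "int a * int D + d = (b - d) * (int B - 1)"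
  shows "(of_nat a * of_nat (C * m + D) + of_int b) / (of_nat a * of_nat (C * m + D) + of_int d)
       = (of_nat A * of_nat m + of_nat B) / (of_nat A * of_nat m + (of_nat B - 1) :: rat)"
proof -
  define k :: rat where "k = of_int (b - d)"
  have "int a * int (C * m + D) + d = (int a * int C) * int m + (int a * int D + d)"
    by (simp add: algebra_simps)
  also have "\<dots> = (b - d) * (int A * int m + (int B - 1))"
    unfolding slope offset by (simp add: algebra_simps)
  finally have den_int: "int a * int (C * m + D) + d = (b - d) * (int A * int m + (int B - 1))" .
  have den: "of_nat a * of_nat (C * m + D) + of_int d = k * (of_nat A * of_nat m + (of_nat B - 1) :: rat)"
    using arg_cong[OF den_int, of "of_int :: int \<Rightarrow> rat"] by (simp add: k_def)
  have num: "of_nat a * of_nat (C * m + D) + of_int b = k * (of_nat A * of_nat m + of_nat B :: rat)"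
    using den by (simp add: k_def algebra_simps)
  have "k \<noteq> 0"
    using assms(1) by (simp add: k_def)
  moreover have "(of_nat A * of_nat m + (of_nat B - 1) :: rat) > 0"
    using assms(2) by (simp add: add_nonneg_pos)
  ultimately show ?thesis
    unfolding num den by simp
qed

lemma pronic_substitution_exists:
  fixes a :: nat and b d :: int
  assumes "a \<ge> 1" and "b > d" and "coprime (int a) (b - d)" and "int a dvd b * d"
  obtains A B C D :: nat
  where "B \<ge> 2" and "A = B * (B - 1)" and "C \<ge> 1" and "D \<ge> 1"
    and "int a * int C = (b - d) * int A" and "int a * int D + d = (b - d) * (int B - 1)"
proof -
  obtain x where x: "x \<ge> \<bar>d\<bar> + 1" and cong: "int a dvd (b - d) * x - d"
    using linear_congruence_large_solution[of "int a" "b - d"] assms(1,3) by auto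
  obtain c where c: "x * (x + 1) = int a * c"
    using dvd_pronic_of_congruence[OF assms(3,4) cong] by blast
  obtain e where e: "(b - d) * x - d = int a * e"
    using cong by blast
  have "1 * x \<le> (b - d) * x"
    using assms(2) x by (intro mult_right_mono) auto
  then have "int a * e > 0"
    using x e by linarith
  then have e_pos: "e > 0"
    by (simp add: zero_less_mult_iff)
  have "x > 0"
    using x abs_ge_zero[of d] by linarith
  then have "int a * c > 0"
    unfolding c[symmetric] by simp
  then have "(b - d) * c > 0"
    using assms(2) by (simp add: zero_less_mult_iff)
  define B where "B = nat (x + 1)"
  define C where "C = nat ((b - d) * c)"
  have B: "int B = x + 1" and "B \<ge> 2"
    using x by (auto simp: B_def)
  have A: "int (B * (B - 1)) = x * (x + 1)"
    using B \<open>B \<ge> 2\<close> by (simp add: of_nat_diff)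
  show thesis
  proof (rule that[of B "B * (B - 1)" C "nat e"])
    have C: "int C = (b - d) * c"
      using \<open>(b - d) * c > 0\<close> by (simp add: C_def)
    show "int a * int C = (b - d) * int (B * (B - 1))"
      unfolding A c C by (simp add: algebra_simps)
    show "int a * int (nat e) + d = (b - d) * (int B - 1)"
      using e e_pos B by simp
  qed (use \<open>B \<ge> 2\<close> \<open>(b - d) * c > 0\<close> e_pos in \<open>auto simp: C_def\<close>)
qed

theorem lemma3p3:
  fixes a :: nat and b d :: int
  assumes "a \<ge> 1" and "b > d" and "gcd (int a) (b - d) = 1" and "int a dvd b * d"
  shows "\<exists>A B :: nat. B \<ge> 2 \<and> A = B * (B - 1) \<and>
           Rset A (int B) A (int B - 1) \<subseteq> Rset a b a d \<and>
           clique_number a b a d \<ge> clique_number A (int B) A (int B - 1) \<and>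
           (\<exists>C D :: nat. C \<ge> 1 \<and> D \<ge> 1 \<and>
              (\<forall>m::nat. m \<ge> 1 \<longrightarrow>
                 (let n = C * m + D in
                   (of_nat a * of_nat n + of_int b) / (of_nat a * of_nat n + of_int d)
                   = (of_nat A * of_nat m + of_nat B) / (of_nat A * of_nat m + (of_nat B - 1) :: rat))))"
proof -
  obtain A B C D :: nat
    where B: "B \<ge> 2" and A: "A = B * (B - 1)" and "C \<ge> 1" and "D \<ge> 1"
      and slope: "int a * int C = (b - d) * int A"
      and offset: "int a * int D + d = (b - d) * (int B - 1)"
    using pronic_substitution_exists assms by (metis coprime_iff_gcd_eq_1)
  have ratio: "(of_nat a * of_nat (C * m + D) + of_int b) / (of_nat a * of_nat (C * m + D) + of_int d)
      = (of_nat A * of_nat m + of_nat B) / (of_nat A * of_nat m + (of_nat B - 1) :: rat)" for m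
    using substitution_ratio_eq[OF assms(2) B slope offset] .
  have sub: "Rset A (int B) A (int B - 1) \<subseteq> Rset a b a d"
    by (rule Rset_subset_Rset[where f = "\<lambda>m. C * m + D"]) (use \<open>D \<ge> 1\<close> ratio in auto)
  show ?thesis
    unfolding Let_def using B A sub clique_number_mono[OF sub] \<open>C \<ge> 1\<close> \<open>D \<ge> 1\<close> ratio
    by blast
qed

end
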